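(* Assume $m\le n$. Then there do not exist distinct Generalized Nash equilibria $\mathbf{x}=(\mathbf{x}_1,\dots,\mathbf{x}_n)$ and $\mathbf{y}=(\mathbf{y}_1,\dots,\mathbf{y}_n)$ of $G^{(2)}$ such that $\mathbf{x}_T^{(j)}\le\mathbf{y}_T^{(j)}$ for all $j\in[m]$ and $\sum_{j\in[m]}\mathbf{x}_T^{(j)}<\sum_{j\in[m]}\mathbf{y}_T^{(j)}$.
   Context: $G^{(2)}$ is a Fragile multi-CPR Game with $n\ge1$ players and $m\ge1$ CPRs: $[k]=\{1,\dots,k\}$, $C_m=\{(x_1,\dots,x_m)\in[0,1]^m:\sum_j x_j\le1\}$, $\mathcal{C}_n=\prod_{i\in[n]}C_m$, $\mathcal{C}_{-i}=\prod_{[n]\setminus\{i\}}C_m$. A profile is $\mathbf{x}=(\mathbf{x}_1,\dots,\mathbf{x}_n)$, $\mathbf{x}_i=(x_{i1},\dots,x_{im})$; write $\mathbf{x}=(\mathbf{x}_i,\mathbf{x}_{-i})$; $\mathbf{x}_T^{(j)}=\sum_i x_{ij}$, $\mathbf{x}_T^{j|i}=\sum_{\ell\ne i}x_{\ell j}$. Each CPR $j$ has return rate $\mathcal{R}_j(t)>1$ and failure probability $p_j(t)\in[0,1]$; each player $i$ has parameters $a_i,k_i$. $\mathcal{F}_{ij}(t)=(\mathcal{R}_j(t)-1)^{a_i}(1-p_j(t))-k_ip_j(t)$; utility $\mathcal{V}_i(\mathbf{x}_i;\mathbf{x}_{-i})=\sum_j x_{ij}^{a_i}\mathcal{F}_{ij}(\mathbf{x}_T^{(j)})$.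 Assumption: (1) $p_j(0)=0$, $p_j(t)=1$ for $t\ge1$; (2) $a_i\in(0,1]$, $k_i>0$; (3) each $\mathcal{F}_{ij}$ (continuous on $[0,1]$) has strictly negative first and second derivatives on $(0,1)$. $\omega_{ij}\in(0,1)$ is the unique zero of $\mathcal{F}_{ij}$ in $(0,1)$. $A(\mathbf{x}_{-i})=\{j:\mathbf{x}_T^{j|i}<\omega_{ij}\}$. $\vartheta_i(\mathbf{x}_{-i})=C_m\cap\big(\prod_{j\in A(\mathbf{x}_{-i})}[0,\omega_{ij}-\mathbf{x}_T^{j|i}]\times\prod_{j\notin A(\mathbf{x}_{-i})}\{0\}\big)$. A Generalized Nash equilibrium is $\mathbf{x}\in\mathcal{C}_n$ with, for all $i$, $\mathbf{x}_i\in\vartheta_i(\mathbf{x}_{-i})$ and $\mathcal{V}_i(\mathbf{x}_i;\mathbf{x}_{-i})\ge\mathcal{V}_i(\mathbf{z};\mathbf{x}_{-i})$ for all $\mathbf{z}\in\vartheta_i(\mathbf{x}_{-i})$. *)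

theory Defs
  imports "HOL-Analysis.Analysis"
begin

text \<open>Players are indexed by {1..n}, CPRs by {1..m}.
  A strategy of a player is a function z :: nat => real that vanishes outside {1..m};
  a profile is x :: nat => nat => real with x i j the investment of player i in CPR j,
  vanishing outside {1..n} x {1..m}.
  Parameters: R j t (return rate of CPR j), p j t (failure probability of CPR j),
  a i, k i (player parameters).\<close>

definition strat_space :: "nat \<Rightarrow> (nat \<Rightarrow> real) set" where
  "strat_space m = {z. (\<forall>j\<in>{1..m}. 0 \<le> z j \<and> z j \<le> 1) \<and> (\<forall>j. j \<notin> {1..m} \<longrightarrow> z j = 0)
                       \<and> (\<Sum>j\<in>{1..m}. z j) \<le> 1}"

definition profiles :: "nat \<Rightarrow> nat \<Rightarrow> (nat \<Rightarrow> nat \<Rightarrow> real) set" where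
  "profiles n m = {x. (\<forall>i\<in>{1..n}. x i \<in> strat_space m) \<and> (\<forall>i. i \<notin> {1..n} \<longrightarrow> x i = (\<lambda>_. 0))}"

definition xT :: "nat \<Rightarrow> (nat \<Rightarrow> nat \<Rightarrow> real) \<Rightarrow> nat \<Rightarrow> real" where
  "xT n x j = (\<Sum>i\<in>{1..n}. x i j)"

definition xT_oth :: "nat \<Rightarrow> (nat \<Rightarrow> nat \<Rightarrow> real) \<Rightarrow> nat \<Rightarrow> nat \<Rightarrow> real" where
  "xT_oth n x i j = (\<Sum>l\<in>{1..n} - {i}. x l j)"

definition FF :: "(nat \<Rightarrow> real \<Rightarrow> real) \<Rightarrow> (nat \<Rightarrow> real \<Rightarrow> real) \<Rightarrow> (nat \<Rightarrow> real) \<Rightarrow> (nat \<Rightarrow> real)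
                  \<Rightarrow> nat \<Rightarrow> nat \<Rightarrow> real \<Rightarrow> real" where
  "FF R p a k i j t = (R j t - 1) powr (a i) * (1 - p j t) - k i * p j t"

definition VV :: "nat \<Rightarrow> nat \<Rightarrow> (nat \<Rightarrow> real \<Rightarrow> real) \<Rightarrow> (nat \<Rightarrow> real \<Rightarrow> real) \<Rightarrow> (nat \<Rightarrow> real) \<Rightarrow> (nat \<Rightarrow> real)
                  \<Rightarrow> nat \<Rightarrow> (nat \<Rightarrow> real) \<Rightarrow> (nat \<Rightarrow> nat \<Rightarrow> real) \<Rightarrow> real" where
  "VV n m R p a k i z x = (\<Sum>j\<in>{1..m}. z j powr (a i) * FF R p a k i j (z j + xT_oth n x i j))"

definition omega :: "(nat \<Rightarrow> real \<Rightarrow> real) \<Rightarrow> (nat \<Rightarrow> real \<Rightarrow> real) \<Rightarrow> (nat \<Rightarrow> real) \<Rightarrow> (nat \<Rightarrow> real)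
                  \<Rightarrow> nat \<Rightarrow> nat \<Rightarrow> real" where
  "omega R p a k i j = (THE w. w \<in> {0<..<1} \<and> FF R p a k i j w = 0)"

definition Aset :: "nat \<Rightarrow> nat \<Rightarrow> (nat \<Rightarrow> real \<Rightarrow> real) \<Rightarrow> (nat \<Rightarrow> real \<Rightarrow> real) \<Rightarrow> (nat \<Rightarrow> real) \<Rightarrow> (nat \<Rightarrow> real)
                  \<Rightarrow> nat \<Rightarrow> (nat \<Rightarrow> nat \<Rightarrow> real) \<Rightarrow> nat set" where
  "Aset n m R p a k i x = {j\<in>{1..m}. xT_oth n x i j < omega R p a k i j}"

definition feas :: "nat \<Rightarrow> nat \<Rightarrow> (nat \<Rightarrow> real \<Rightarrow> real) \<Rightarrow> (nat \<Rightarrow> real \<Rightarrow> real) \<Rightarrow> (nat \<Rightarrow> real) \<Rightarrow> (nat \<Rightarrow> real)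
                  \<Rightarrow> nat \<Rightarrow> (nat \<Rightarrow> nat \<Rightarrow> real) \<Rightarrow> (nat \<Rightarrow> real) set" where
  "feas n m R p a k i x = {z \<in> strat_space m.
      (\<forall>j\<in>Aset n m R p a k i x. 0 \<le> z j \<and> z j \<le> omega R p a k i j - xT_oth n x i j) \<and>
      (\<forall>j\<in>{1..m} - Aset n m R p a k i x. z j = 0)}"

definition GNE :: "nat \<Rightarrow> nat \<Rightarrow> (nat \<Rightarrow> real \<Rightarrow> real) \<Rightarrow> (nat \<Rightarrow> real \<Rightarrow> real) \<Rightarrow> (nat \<Rightarrow> real) \<Rightarrow> (nat \<Rightarrow> real)
                  \<Rightarrow> (nat \<Rightarrow> nat \<Rightarrow> real) \<Rightarrow> bool" where
  "GNE n m R p a k x \<longleftrightarrow> x \<in> profiles n m \<and>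
     (\<forall>i\<in>{1..n}. x i \<in> feas n m R p a k i x \<and>
        (\<forall>z\<in>feas n m R p a k i x. VV n m R p a k i (x i) x \<ge> VV n m R p a k i z x))"

end

theory Submission
  imports Defs
begin

text \<open>Suppose some player i invests more in total at y than at x. Then she invests strictly
  more at y in some CPR j, i.e. u = x i j < v = y i j, although the load S on j at x is at most
  the load T at y. Her payoff from j is t powr a * F (t + c) with F = FF R p a k i j decreasing and concave.
  At x she has unused budget, so raising u does not pay; at y lowering v does not pay. The
  first-order conditions give a F(S) + u F'(S) \<le> 0 \<le> a F(T) + v F'(T), which is impossible
  since F(T) \<le> F(S) and F'(T) \<le> F'(S) < 0. So every player's total investment at y is at most
  that at x, and summing over the players contradicts the strict inequality between the
  aggregate loads.\<close>

lemma powr_mult_shift_has_real_derivative: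
  fixes F :: "real \<Rightarrow> real"
  assumes "0 < u" and "(F has_real_derivative D) (at (u + c))"
  shows "((\<lambda>t. t powr a * F (t + c)) has_real_derivative
           u powr (a - 1) * (a * F (u + c) + u * D)) (at u)"
proof -
  have "((\<lambda>t. F (t + c)) has_real_derivative D) (at u)"
    using assms(2) DERIV_shift by blast
  from DERIV_mult[OF has_real_derivative_powr[OF assms(1)] this]
  have "((\<lambda>t. t powr a * F (t + c)) has_real_derivative
          a * u powr (a - 1) * F (u + c) + u powr a * D) (at u)"
    by (simp add: mult.commute)
  moreover have "u powr a = u powr (a - 1) * u"
    using assms(1) by (simp add: powr_diff)
  ultimately show ?thesis
    by (simp add: algebra_simps)
qed

lemma marginal_payoff_nonpos_of_no_gain_right:
  fixes F :: "real \<Rightarrow> real"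
  assumes "0 < u" and "(F has_real_derivative D) (at (u + c))" and "0 < \<delta>"
    and no_gain: "\<And>h. 0 < h \<Longrightarrow> h < \<delta> \<Longrightarrow> (u + h) powr a * F (u + h + c) \<le> u powr a * F (u + c)"
  shows "a * F (u + c) + u * D \<le> 0"
proof (rule ccontr)
  assume "\<not> ?thesis"
  then have "0 < u powr (a - 1) * (a * F (u + c) + u * D)"
    using \<open>0 < u\<close> by simp
  from DERIV_pos_inc_right[OF powr_mult_shift_has_real_derivative[OF assms(1,2)] this]
  obtain d where "0 < d" and gain: "\<And>h. 0 < h \<Longrightarrow> h < d \<Longrightarrow>
      u powr a * F (u + c) < (u + h) powr a * F (u + h + c)"
    by (auto simp: add.assoc add.left_commute)
  define h where "h = min d \<delta> / 2"
  have "0 < h" "h < d" "h < \<delta>"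
    using \<open>0 < d\<close> \<open>0 < \<delta>\<close> by (auto simp: h_def)
  then show False
    using gain no_gain by (meson not_le)
qed

lemma marginal_payoff_nonneg_of_no_gain_left:
  fixes F :: "real \<Rightarrow> real"
  assumes "0 < u" and "(F has_real_derivative D) (at (u + c))" and "0 < \<delta>"
    and no_gain: "\<And>h. 0 < h \<Longrightarrow> h < \<delta> \<Longrightarrow> (u - h) powr a * F (u - h + c) \<le> u powr a * F (u + c)"
  shows "0 \<le> a * F (u + c) + u * D"
proof (rule ccontr)
  assume "\<not> ?thesis"
  then have "u powr (a - 1) * (a * F (u + c) + u * D) < 0"
    using \<open>0 < u\<close> by (simp add: mult_pos_neg)
  from DERIV_neg_dec_left[OF powr_mult_shift_has_real_derivative[OF assms(1,2)] this]
  obtain d where "0 < d" and gain: "\<And>h. 0 < h \<Longrightarrow> h < d \<Longrightarrow>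
      u powr a * F (u + c) < (u - h) powr a * F (u - h + c)"
    by auto
  define h where "h = min d \<delta> / 2"
  have "0 < h" "h < d" "h < \<delta>"
    using \<open>0 < d\<close> \<open>0 < \<delta>\<close> by (auto simp: h_def)
  then show False
    using gain no_gain by (meson not_le)
qed

locale fragile_payoff =
  fixes F F' :: "real \<Rightarrow> real"
  assumes continuous: "continuous_on {0..1} F"
    and pos_at_0: "0 < F 0"
    and neg_at_1: "F 1 < 0"
    and deriv: "\<And>t. t \<in> {0<..<1} \<Longrightarrow> (F has_real_derivative F' t) (at t)"
    and deriv_neg: "\<And>t. t \<in> {0<..<1} \<Longrightarrow> F' t < 0"
    and deriv2_neg: "\<And>t. t \<in> {0<..<1} \<Longrightarrow> \<exists>F''. (F' has_real_derivative F'') (at t) \<and> F'' < 0"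
begin

lemma strict_decreasing:
  assumes "0 \<le> s" and "s < t" and "t \<le> 1"
  shows "F t < F s"
proof (rule DERIV_neg_imp_decreasing_open[OF \<open>s < t\<close>])
  show "continuous_on {s..t} F"
    using continuous by (rule continuous_on_subset) (use assms in auto)
next
  fix x assume "s < x" "x < t"
  then show "\<exists>y. (F has_real_derivative y) (at x) \<and> y < 0"
    using assms deriv[of x] deriv_neg[of x] by auto
qed

lemma deriv_antimono:
  assumes "0 < s" and "s \<le> t" and "t < 1"
  shows "F' t \<le> F' s"
proof (cases "s = t")
  case False
  have "F' t < F' s"
  proof (rule DERIV_neg_imp_decreasing[of s t])
    fix x assume "s \<le> x" "x \<le> t"
    then show "\<exists>y. (F' has_real_derivative y) (at x) \<and> y < 0"
      using assms deriv2_neg[of x] by auto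
  next
    show "s < t" using assms False by simp
  qed
  then show ?thesis
    by simp
qed simp

lemma ex1_zero: "\<exists>!w. w \<in> {0<..<1} \<and> F w = 0"
proof -
  obtain w where "0 \<le> w" "w \<le> 1" "F w = 0"
    using IVT2'[of F 1 0 0] pos_at_0 neg_at_1 continuous by force
  moreover have "w \<noteq> 0" "w \<noteq> 1"
    using \<open>F w = 0\<close> pos_at_0 neg_at_1 by auto
  moreover have "w' = w" if "w' \<in> {0<..<1}" "F w' = 0" for w'
  proof (rule ccontr)
    assume "w' \<noteq> w"
    then consider "w' < w" | "w < w'"
      by linarith
    then show False
      using strict_decreasing[of w w'] strict_decreasing[of w' w] that \<open>F w = 0\<close> \<open>0 \<le> w\<close> \<open>w \<le> 1\<close>
      by cases auto
  qed
  ultimately show ?thesis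
    by (intro ex1I[of _ w]) auto
qed

lemma optimal_investment_antitone:
  assumes zero: "w \<in> {0<..<1}" "F w = 0" and "0 \<le> a"
    and "0 \<le> u" "0 \<le> c" "0 \<le> d" "u + c \<le> v + d" "v + d \<le> w" and "0 < slack"
    and x_opt: "\<And>h. 0 < h \<Longrightarrow> u + h + c \<le> w \<Longrightarrow> h \<le> slack \<Longrightarrow>
                  (u + h) powr a * F (u + h + c) \<le> u powr a * F (u + c)"
    and y_opt: "\<And>h. 0 < h \<Longrightarrow> h \<le> v \<Longrightarrow>
                  (v - h) powr a * F (v - h + d) \<le> v powr a * F (v + d)"
  shows "v \<le> u"
proof (rule ccontr)
  assume "\<not> v \<le> u"
  then have "u < v" "0 < v"
    using \<open>0 \<le> u\<close> by auto
  define S T where "S = u + c" and "T = v + d"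
  have T01: "T \<in> {0<..<1}"
    using \<open>0 < v\<close> \<open>0 \<le> d\<close> \<open>v + d \<le> w\<close> zero by (auto simp: T_def)
  have y_marginal: "0 \<le> a * F T + v * F' T"
    unfolding T_def using \<open>0 < v\<close> deriv[OF T01] y_opt
    by (intro marginal_payoff_nonneg_of_no_gain_left[of v F _ d v a]) (auto simp: T_def)
  have "T < w"
  proof (rule ccontr)
    assume "\<not> T < w"
    then have "F T = 0"
      using \<open>v + d \<le> w\<close> zero by (simp add: T_def)
    then show False
      using y_marginal mult_pos_neg[OF \<open>0 < v\<close> deriv_neg[OF T01]] by simp
  qed
  then have "S < w"
    using \<open>u + c \<le> v + d\<close> by (simp add: S_def T_def)
  show False
  proof (cases "u = 0")
    case True
    \<comment> \<open>\<open>t powr a\<close> is not differentiable at 0; instead, any small investment earns a positive payoff.\<close>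
    define h where "h = min slack (w - S) / 2"
    have h: "0 < h" "c + h < w" "h \<le> slack"
      using \<open>S < w\<close> \<open>0 < slack\<close> True by (auto simp: h_def S_def min_def field_simps)
    have "0 < F (c + h)"
      using strict_decreasing[of "c + h" w] h \<open>0 \<le> c\<close> zero by auto
    then have "0 < h powr a * F (c + h)"
      using \<open>0 < h\<close> by simp
    then show False
      using x_opt[of h] h True by (simp add: add.commute)
  next
    case False
    then have "0 < u"
      using \<open>0 \<le> u\<close> by simp
    have S01: "S \<in> {0<..<1}"
      using \<open>0 < u\<close> \<open>0 \<le> c\<close> \<open>S < w\<close> zero by (auto simp: S_def)
    have x_marginal: "a * F S + u * F' S \<le> 0"
      unfolding S_def using \<open>0 < u\<close> deriv[OF S01] \<open>S < w\<close> \<open>0 < slack\<close> x_opt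
      by (intro marginal_payoff_nonpos_of_no_gain_right[of u F _ c "min slack (w - S)" a])
        (auto simp: S_def)
    have "F T \<le> F S"
      using strict_decreasing[of S T] S01 T01 \<open>u + c \<le> v + d\<close>
      by (cases "S = T") (auto simp: S_def T_def)
    moreover have "F' T \<le> F' S"
      using deriv_antimono[of S T] S01 T01 \<open>u + c \<le> v + d\<close> by (simp add: S_def T_def)
    moreover have "v * F' S < u * F' S"
      using deriv_neg[OF S01] \<open>u < v\<close> by simp
    ultimately have "a * F T + v * F' T < a * F S + u * F' S"
      using \<open>0 \<le> a\<close> \<open>0 < v\<close> mult_left_mono[of "F T" "F S" a] mult_left_mono[of "F' T" "F' S" v]
      by linarith
    then show False
      using x_marginal y_marginal by linarith
  qed
qed

end

lemma fragile_payoff_FF: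
  assumes "\<forall>t\<ge>0. R j t > 1" and "p j 0 = 0" and "p j 1 = 1" and "0 < k i"
    and "continuous_on {0..1} (FF R p a k i j)"
    and "\<forall>t\<in>{0<..<1}. (FF R p a k i j has_real_derivative F' t) (at t) \<and> F' t < 0 \<and>
           (\<exists>F''. (F' has_real_derivative F'') (at t) \<and> F'' < 0)"
  shows "fragile_payoff (FF R p a k i j) F'"
proof
  have "1 < R j 0"
    using assms(1) by simp
  then have "0 < (R j 0 - 1) powr a i"
    by simp
  then show "0 < FF R p a k i j 0"
    using assms(2) by (simp add: FF_def)
  show "FF R p a k i j 1 < 0"
    using assms(3,4) by (simp add: FF_def)
qed (use assms(5,6) in auto)

lemma sum_fun_upd:
  fixes g :: "'a \<Rightarrow> 'b \<Rightarrow> 'c::ab_group_add"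
  assumes "finite A" and "j \<in> A"
  shows "(\<Sum>l\<in>A. g l ((f(j := w)) l)) = (\<Sum>l\<in>A. g l (f l)) - g j (f j) + g j w"
proof -
  have "(\<Sum>l\<in>A - {j}. g l ((f(j := w)) l)) = (\<Sum>l\<in>A - {j}. g l (f l))"
    by (rule sum.cong) auto
  then show ?thesis
    using sum.remove[OF assms, of "\<lambda>l. g l ((f(j := w)) l)"] sum.remove[OF assms, of "\<lambda>l. g l (f l)"]
    by simp
qed

lemma xT_eq_own_plus_others: "i \<in> {1..n} \<Longrightarrow> xT n x j = x i j + xT_oth n x i j"
  unfolding xT_def xT_oth_def by (rule sum.remove) auto

lemma profiles_nonneg: "x \<in> profiles n m \<Longrightarrow> 0 \<le> x i j"
  unfolding profiles_def strat_space_def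
  by (cases "i \<in> {1..n}"; cases "j \<in> {1..m}") auto

lemma xT_oth_nonneg: "x \<in> profiles n m \<Longrightarrow> 0 \<le> xT_oth n x i j"
  unfolding xT_oth_def by (rule sum_nonneg) (use profiles_nonneg in auto)

lemma VV_fun_upd:
  assumes "j \<in> {1..m}"
  shows "VV n m R p a k i ((x i)(j := w)) x = VV n m R p a k i (x i) x
           - x i j powr a i * FF R p a k i j (x i j + xT_oth n x i j)
           + w powr a i * FF R p a k i j (w + xT_oth n x i j)"
  unfolding VV_def
  using sum_fun_upd[of "{1..m}" j "\<lambda>l v. v powr a i * FF R p a k i l (v + xT_oth n x i l)" "x i" w] assms
  by simp

lemma fun_upd_in_feas:
  assumes feas: "x i \<in> feas n m R p a k i x" and j: "j \<in> Aset n m R p a k i x"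
    and "0 \<le> w" and "w \<le> omega R p a k i j - xT_oth n x i j"
    and budget: "(\<Sum>l\<in>{1..m}. x i l) - x i j + w \<le> 1"
  shows "(x i)(j := w) \<in> feas n m R p a k i x"
proof -
  have strat: "x i \<in> strat_space m"
    using feas by (simp add: feas_def)
  have "j \<in> {1..m}"
    using j by (simp add: Aset_def)
  have "(\<Sum>l\<in>{1..m}. ((x i)(j := w)) l) = (\<Sum>l\<in>{1..m}. x i l) - x i j + w"
    using sum_fun_upd[of "{1..m}" j "\<lambda>l v. v" "x i" w] \<open>j \<in> {1..m}\<close> by simp
  moreover have "x i j \<le> (\<Sum>l\<in>{1..m}. x i l)"
    using strat \<open>j \<in> {1..m}\<close> by (intro member_le_sum) (auto simp: strat_space_def)
  ultimately show ?thesis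
    using feas j \<open>0 \<le> w\<close> \<open>w \<le> omega R p a k i j - xT_oth n x i j\<close> budget
    by (auto simp: feas_def strat_space_def)
qed

lemma GNE_single_deviation:
  assumes "GNE n m R p a k x" and "i \<in> {1..n}" and "j \<in> Aset n m R p a k i x"
    and "0 \<le> w" and "w \<le> omega R p a k i j - xT_oth n x i j"
    and "(\<Sum>l\<in>{1..m}. x i l) - x i j + w \<le> 1"
  shows "w powr a i * FF R p a k i j (w + xT_oth n x i j)
           \<le> x i j powr a i * FF R p a k i j (x i j + xT_oth n x i j)"
proof -
  have "x i \<in> feas n m R p a k i x"
    and opt: "\<And>z. z \<in> feas n m R p a k i x \<Longrightarrow> VV n m R p a k i z x \<le> VV n m R p a k i (x i) x"
    using assms(1,2) by (auto simp: GNE_def)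
  then have "VV n m R p a k i ((x i)(j := w)) x \<le> VV n m R p a k i (x i) x"
    using assms(3-) by (intro opt fun_upd_in_feas) auto
  moreover have "j \<in> {1..m}"
    using assms(3) by (simp add: Aset_def)
  ultimately show ?thesis
    by (simp add: VV_fun_upd)
qed

lemma GNE_player_total_antitone:
  assumes gx: "GNE n m R p a k x" and gy: "GNE n m R p a k y"
    and i: "i \<in> {1..n}" and "0 \<le> a i"
    and load_le: "\<forall>j\<in>{1..m}. xT n x j \<le> xT n y j"
    and fragile: "\<And>j. j \<in> {1..m} \<Longrightarrow> \<exists>F'. fragile_payoff (FF R p a k i j) F'"
  shows "(\<Sum>j\<in>{1..m}. y i j) \<le> (\<Sum>j\<in>{1..m}. x i j)"
proof (rule ccontr)
  assume "\<not> ?thesis"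
  then have total_lt: "(\<Sum>j\<in>{1..m}. x i j) < (\<Sum>j\<in>{1..m}. y i j)"
    by simp
  then obtain j where j: "j \<in> {1..m}" and "x i j < y i j"
    using sum_mono[of "{1..m}" "y i" "x i"] by (meson not_le)
  obtain F' where "fragile_payoff (FF R p a k i j) F'"
    using fragile[OF j] by blast
  then interpret fragile_payoff "FF R p a k i j" F' .
  define w where "w = omega R p a k i j"
  have zero: "w \<in> {0<..<1}" "FF R p a k i j w = 0"
    using theI'[OF ex1_zero] by (simp_all add: w_def omega_def)
  have px: "x \<in> profiles n m" and py: "y \<in> profiles n m"
    using gx gy by (simp_all add: GNE_def)
  have feas_y: "y i \<in> feas n m R p a k i y"
    using gy i by (simp add: GNE_def)
  have y_budget: "(\<Sum>l\<in>{1..m}. y i l) \<le> 1"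
    using feas_y by (simp add: feas_def strat_space_def)
  have "j \<in> Aset n m R p a k i y"
    using feas_y j \<open>x i j < y i j\<close> profiles_nonneg[OF px, of i j] by (force simp: feas_def)
  then have y_cap: "y i j + xT_oth n y i j \<le> w"
    using feas_y unfolding feas_def w_def by fastforce
  have "y i j \<le> x i j"
  proof (rule optimal_investment_antitone[OF zero \<open>0 \<le> a i\<close>])
    show "0 \<le> x i j" "0 \<le> xT_oth n x i j" "0 \<le> xT_oth n y i j"
      using profiles_nonneg[OF px] xT_oth_nonneg[OF px] xT_oth_nonneg[OF py] by auto
    show "x i j + xT_oth n x i j \<le> y i j + xT_oth n y i j"
      using load_le j by (simp add: xT_eq_own_plus_others[OF i])
    show "y i j + xT_oth n y i j \<le> w"
      by (rule y_cap)
    show "0 < 1 - (\<Sum>l\<in>{1..m}. x i l)"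
      using total_lt y_budget by simp
  next
    fix h assume "0 < h" "x i j + h + xT_oth n x i j \<le> w" "h \<le> 1 - (\<Sum>l\<in>{1..m}. x i l)"
    moreover have "j \<in> Aset n m R p a k i x"
      using j calculation profiles_nonneg[OF px, of i j] by (simp add: Aset_def w_def)
    ultimately show "(x i j + h) powr a i * FF R p a k i j (x i j + h + xT_oth n x i j)
                       \<le> x i j powr a i * FF R p a k i j (x i j + xT_oth n x i j)"
      using profiles_nonneg[OF px, of i j]
      by (intro GNE_single_deviation[OF gx i]) (auto simp: w_def)
  next
    fix h assume "0 < h" "h \<le> y i j"
    with \<open>j \<in> Aset n m R p a k i y\<close> y_cap y_budget
    show "(y i j - h) powr a i * FF R p a k i j (y i j - h + xT_oth n y i j)
            \<le> y i j powr a i * FF R p a k i j (y i j + xT_oth n y i j)"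
      by (intro GNE_single_deviation[OF gy i]) (auto simp: w_def)
  qed
  with \<open>x i j < y i j\<close> show False
    by simp
qed

theorem lemma8:
  fixes n m :: nat
    and R p :: "nat \<Rightarrow> real \<Rightarrow> real"
    and a k :: "nat \<Rightarrow> real"
  assumes "1 \<le> n" and "1 \<le> m" and "m \<le> n"
    and R_gt: "\<forall>j\<in>{1..m}. \<forall>t\<ge>0. R j t > 1"
    and p_range: "\<forall>j\<in>{1..m}. \<forall>t\<ge>0. 0 \<le> p j t \<and> p j t \<le> 1"
    and p0: "\<forall>j\<in>{1..m}. p j 0 = 0"
    and p1: "\<forall>j\<in>{1..m}. \<forall>t\<ge>1. p j t = 1"
    and a_range: "\<forall>i\<in>{1..n}. 0 < a i \<and> a i \<le> 1"
    and k_pos: "\<forall>i\<in>{1..n}. 0 < k i"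
    and F_cont: "\<forall>i\<in>{1..n}. \<forall>j\<in>{1..m}. continuous_on {0..1} (FF R p a k i j)"
    and F_deriv: "\<forall>i\<in>{1..n}. \<forall>j\<in>{1..m}. \<exists>F'. \<forall>t\<in>{0<..<1}.
              (FF R p a k i j has_real_derivative F' t) (at t) \<and> F' t < 0 \<and>
              (\<exists>F''. (F' has_real_derivative F'') (at t) \<and> F'' < 0)"
  shows "\<not> (\<exists>x y. GNE n m R p a k x \<and> GNE n m R p a k y \<and> x \<noteq> y \<and>
              (\<forall>j\<in>{1..m}. xT n x j \<le> xT n y j) \<and>
              (\<Sum>j\<in>{1..m}. xT n x j) < (\<Sum>j\<in>{1..m}. xT n y j))"
proof
  assume "\<exists>x y. GNE n m R p a k x \<and> GNE n m R p a k y \<and> x \<noteq> y \<and>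
              (\<forall>j\<in>{1..m}. xT n x j \<le> xT n y j) \<and>
              (\<Sum>j\<in>{1..m}. xT n x j) < (\<Sum>j\<in>{1..m}. xT n y j)"
  then obtain x y where gx: "GNE n m R p a k x" and gy: "GNE n m R p a k y"
    and load_le: "\<forall>j\<in>{1..m}. xT n x j \<le> xT n y j"
    and load_lt: "(\<Sum>j\<in>{1..m}. xT n x j) < (\<Sum>j\<in>{1..m}. xT n y j)"
    by blast
  have fragile: "\<exists>F'. fragile_payoff (FF R p a k i j) F'" if "i \<in> {1..n}" "j \<in> {1..m}" for i j
    using F_deriv that R_gt p0 p1 k_pos F_cont by (metis fragile_payoff_FF order_refl)
  have "(\<Sum>j\<in>{1..m}. xT n y j) = (\<Sum>i\<in>{1..n}. \<Sum>j\<in>{1..m}. y i j)"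
    unfolding xT_def by (rule sum.swap)
  also have "\<dots> \<le> (\<Sum>i\<in>{1..n}. \<Sum>j\<in>{1..m}. x i j)"
    using gx gy load_le fragile a_range
    by (intro sum_mono GNE_player_total_antitone) (auto simp: less_imp_le)
  also have "\<dots> = (\<Sum>j\<in>{1..m}. xT n x j)"
    unfolding xT_def by (rule sum.swap)
  finally show False
    using load_lt by simp
qed

end
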